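(* Let $\mathbf C$ be the covariance matrix of a Matérn Gaussian process with parameters $(\sigma_0^2,\phi_0,\nu_0)$ evaluated at locations $s_1,\dots,s_n\in\mathbb R^2$ satisfying $\|s_i-s_j\|\ge h$ for all $i\ne j$, for a fixed $h>0$, and let $\tau_0^2\ge0$. Then the maximum eigenvalue of $\boldsymbol\Sigma=\mathbf C+\tau_0^2\mathbf I$ has an upper bound $\Psi_{high}<\infty$ that is uniform in $n$.
   Context: Matérn covariance: $\mathbf C_{ij}=C(\|s_i-s_j\|)$ with $C(d)=\frac{2^{1-\nu_0}\sigma_0^2(\sqrt2\phi_0d)^{\nu_0}}{\Gamma(\nu_0)}\mathcal K_{\nu_0}(\sqrt2\phi_0d)$ (and $C(0)=\sigma_0^2$), $\mathcal K_\nu$ the modified Bessel function of the second kind. *)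

theory Defs
  imports "HOL-Analysis.Analysis" "Jordan_Normal_Form.Char_Poly"
begin

text \<open>Modified Bessel function of the second kind, for x > 0, via the standard
  integral representation K_nu(x) = integral over [0,inf) of exp(-x cosh t) cosh(nu t) dt.\<close>
definition besselK :: "real \<Rightarrow> real \<Rightarrow> real" where
  "besselK \<nu> x = integral {0..} (\<lambda>t. exp (- x * cosh t) * cosh (\<nu> * t))"

definition matern :: "real \<Rightarrow> real \<Rightarrow> real \<Rightarrow> real \<Rightarrow> real" where
  "matern \<sigma>2 \<phi> \<nu> d =
     (if d = 0 then \<sigma>2
      else 2 powr (1 - \<nu>) * \<sigma>2 * (sqrt 2 * \<phi> * d) powr \<nu> / Gamma \<nu>
           * besselK \<nu> (sqrt 2 * \<phi> * d))"

definition matern_Sigma ::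
  "real \<Rightarrow> real \<Rightarrow> real \<Rightarrow> real \<Rightarrow> nat \<Rightarrow> (nat \<Rightarrow> real^2) \<Rightarrow> real mat" where
  "matern_Sigma \<sigma>2 \<phi> \<nu> \<tau>2 n s =
     mat n n (\<lambda>(i, j). matern \<sigma>2 \<phi> \<nu> (norm (s i - s j)) + (if i = j then \<tau>2 else 0))"

end

(*
  Every eigenvalue of Sigma is bounded by its largest absolute row sum, that is by
  |sigma^2 + tau^2| plus the sum of |C(|s_i - s_j|)| over j /= i.  At distances d >= h the
  Matern function decays exponentially: with x = sqrt 2 phi d, the factor x^nu is absorbed by
  exp (x / 2), and the integral representation of K_nu gives K_nu(x) <= exp (x0 - x) K_nu(x0)
  for x >= x0 > 0.  Since the locations are h-separated, every square of side h/2 contains at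
  most one of them, so the off-diagonal part of a row sum is dominated by a two-dimensional
  geometric lattice sum, which does not depend on n.
*)
theory Submission
  imports Defs
begin

lemma cosh_real_eq_exp_abs: fixes t :: real shows "cosh t = (exp \<bar>t\<bar> + exp (- \<bar>t\<bar>)) / 2"
  using cosh_field_def[of "\<bar>t\<bar>"] by simp

lemma cosh_ge_square_div_4: fixes t :: real shows "t\<^sup>2 / 4 \<le> cosh t"
proof -
  have "t\<^sup>2 / 2 \<le> exp \<bar>t\<bar>"
    using exp_lower_Taylor_quadratic[of "\<bar>t\<bar>"] by simp
  moreover have "exp (- \<bar>t\<bar>) > 0" by simp
  ultimately show ?thesis using cosh_real_eq_exp_abs[of t] by argo
qed

lemma cosh_le_exp_abs: fixes t :: real shows "cosh t \<le> exp \<bar>t\<bar>"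
proof -
  have "exp (- \<bar>t\<bar>) \<le> exp \<bar>t\<bar>" by simp
  then show ?thesis using cosh_real_eq_exp_abs[of t] by argo
qed

lemma besselK_integrand_le:
  fixes x \<nu> t :: real
  assumes "x > 0" "t \<ge> 0"
  shows "exp (- x * cosh t) * cosh (\<nu> * t) \<le> exp ((\<bar>\<nu>\<bar> + 1)\<^sup>2 / x) * exp (- t)"
proof -
  let ?a = "\<bar>\<nu>\<bar> + 1"
  have "x * (t\<^sup>2 / 4) \<le> x * cosh t"
    using assms(1) cosh_ge_square_div_4 by (intro mult_left_mono) auto
  moreover have "?a\<^sup>2 / x - ?a * t + x * (t\<^sup>2 / 4) = x / 4 * (t - 2 * ?a / x)\<^sup>2"
    using assms(1) by (simp add: field_simps power2_eq_square)
  moreover have "x / 4 * (t - 2 * ?a / x)\<^sup>2 \<ge> 0" using assms(1) by simp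
  ultimately have exponent_le: "- x * cosh t + \<bar>\<nu>\<bar> * t \<le> ?a\<^sup>2 / x - t"
    by (simp add: algebra_simps)
  have "cosh (\<nu> * t) \<le> exp (\<bar>\<nu>\<bar> * t)"
    using cosh_le_exp_abs[of "\<nu> * t"] assms(2) by (simp add: abs_mult)
  then have "exp (- x * cosh t) * cosh (\<nu> * t) \<le> exp (- x * cosh t) * exp (\<bar>\<nu>\<bar> * t)"
    by (rule mult_left_mono) simp
  also have "\<dots> = exp (- x * cosh t + \<bar>\<nu>\<bar> * t)" by (rule exp_add[symmetric])
  also have "\<dots> \<le> exp (?a\<^sup>2 / x - t)" using exponent_le by simp
  also have "\<dots> = exp (?a\<^sup>2 / x) * exp (- t)" by (simp add: exp_diff exp_minus divide_inverse)
  finally show ?thesis .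
qed

lemma besselK_integrable:
  fixes x \<nu> :: real
  assumes "x > 0"
  shows "(\<lambda>t. exp (- x * cosh t) * cosh (\<nu> * t)) integrable_on {0..}"
proof (rule measurable_bounded_by_integrable_imp_integrable_real)
  show "(\<lambda>t. exp (- x * cosh t) * cosh (\<nu> * t)) \<in> borel_measurable (lebesgue_on {0..})"
    by (intro continuous_imp_measurable_on_sets_lebesgue continuous_intros) auto
  show "(\<lambda>t. exp ((\<bar>\<nu>\<bar> + 1)\<^sup>2 / x) * exp (- 1 * t)) integrable_on {0..}"
    using integrable_on_exp_minus_to_infinity[of 1 0] by (intro integrable_on_mult_right) auto
  show "\<bar>exp (- x * cosh t) * cosh (\<nu> * t)\<bar> \<le> exp ((\<bar>\<nu>\<bar> + 1)\<^sup>2 / x) * exp (- 1 * t)"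
    if "t \<in> {0..}" for t
    using besselK_integrand_le[OF assms] that by simp
qed auto

lemma besselK_nonneg: "x > 0 \<Longrightarrow> besselK \<nu> x \<ge> 0"
  unfolding besselK_def by (rule integral_nonneg[OF besselK_integrable]) auto

lemma besselK_le_exp_diff:
  assumes "x0 > 0" "x \<ge> x0"
  shows "besselK \<nu> x \<le> exp (x0 - x) * besselK \<nu> x0"
proof -
  have "exp (- x * cosh t) \<le> exp (x0 - x) * exp (- x0 * cosh t)" for t
  proof -
    have "(x - x0) * 1 \<le> (x - x0) * cosh t"
      using assms cosh_real_ge_1 by (intro mult_left_mono) auto
    then show ?thesis by (simp add: algebra_simps flip: exp_add)
  qed
  then have "besselK \<nu> x \<le> integral {0..} (\<lambda>t. exp (x0 - x) * (exp (- x0 * cosh t) * cosh (\<nu> * t)))"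
    unfolding besselK_def using assms
    by (intro integral_le integrable_on_mult_right besselK_integrable)
       (auto intro: mult_right_mono simp: mult.assoc[symmetric])
  then show ?thesis unfolding besselK_def by simp
qed

lemma powr_le_mult_exp:
  fixes x \<nu> \<epsilon> :: real
  assumes "x > 0" "\<nu> > 0" "\<epsilon> > 0"
  shows "x powr \<nu> \<le> (\<nu> / \<epsilon>) powr \<nu> * exp (\<epsilon> * x)"
proof -
  have "ln (\<epsilon> * x / \<nu>) \<le> \<epsilon> * x / \<nu> - 1" using assms by (intro ln_le_minus_one) auto
  moreover have "ln (\<epsilon> * x / \<nu>) = ln x - ln (\<nu> / \<epsilon>)" using assms by (simp add: ln_div ln_mult)
  ultimately have "\<nu> * (ln x - ln (\<nu> / \<epsilon>)) \<le> \<nu> * (\<epsilon> * x / \<nu>)"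
    using assms by (intro mult_left_mono) auto
  then have "\<nu> * ln x \<le> \<nu> * ln (\<nu> / \<epsilon>) + \<epsilon> * x" using assms by (simp add: field_simps)
  then have "exp (\<nu> * ln x) \<le> exp (\<nu> * ln (\<nu> / \<epsilon>) + \<epsilon> * x)" by simp
  then show ?thesis using assms by (simp add: powr_def exp_add)
qed

lemma powr_mult_besselK_le:
  fixes \<nu> x0 x :: real
  assumes "\<nu> > 0" "x0 > 0" "x \<ge> x0"
  shows "x powr \<nu> * besselK \<nu> x \<le> (2 * \<nu>) powr \<nu> * exp x0 * besselK \<nu> x0 * exp (- x / 2)"
proof -
  have "x powr \<nu> * besselK \<nu> x \<le> ((2 * \<nu>) powr \<nu> * exp (x / 2)) * (exp (x0 - x) * besselK \<nu> x0)"
    using assms powr_le_mult_exp[of x \<nu> "1/2"] mult.commute[of \<nu> 2]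
      besselK_le_exp_diff[of x0 x \<nu>] besselK_nonneg[of x \<nu>]
    by (intro mult_mono) auto
  also have "\<dots> = (2 * \<nu>) powr \<nu> * exp x0 * besselK \<nu> x0 * exp (- x / 2)"
    by (simp add: exp_diff exp_minus field_simps mult_exp_exp)
  finally show ?thesis .
qed

lemma matern_exp_decay:
  fixes \<sigma>2 \<phi> \<nu> h :: real
  assumes "\<phi> > 0" "\<nu> > 0" "h > 0"
  shows "\<exists>B b. b > 0 \<and> (\<forall>d \<ge> h. \<bar>matern \<sigma>2 \<phi> \<nu> d\<bar> \<le> B * exp (- b * d))"
proof -
  define x0 where "x0 = sqrt 2 * \<phi> * h"
  define P where "P = \<bar>2 powr (1 - \<nu>) * \<sigma>2 / Gamma \<nu>\<bar>"
  define C where "C = (2 * \<nu>) powr \<nu> * exp x0 * besselK \<nu> x0"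
  have x0: "x0 > 0" unfolding x0_def using assms by simp
  have "\<bar>matern \<sigma>2 \<phi> \<nu> d\<bar> \<le> P * C * exp (- (sqrt 2 * \<phi> / 2) * d)" if "d \<ge> h" for d
  proof -
    define x where "x = sqrt 2 * \<phi> * d"
    have "x \<ge> x0" unfolding x_def x0_def using assms that by (intro mult_left_mono) auto
    then have "x powr \<nu> * besselK \<nu> x \<ge> 0" "x powr \<nu> * besselK \<nu> x \<le> C * exp (- x / 2)"
      using x0 besselK_nonneg[of x \<nu>] powr_mult_besselK_le[OF assms(2) x0] unfolding C_def
      by auto
    moreover have "\<bar>matern \<sigma>2 \<phi> \<nu> d\<bar> = P * (x powr \<nu> * besselK \<nu> x)"
    proof -
      have "matern \<sigma>2 \<phi> \<nu> d = 2 powr (1 - \<nu>) * \<sigma>2 / Gamma \<nu> * (x powr \<nu> * besselK \<nu> x)"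
        unfolding matern_def x_def using assms that by simp
      then show ?thesis unfolding P_def using calculation(1) by (metis abs_mult_pos)
    qed
    moreover have "P \<ge> 0" unfolding P_def by simp
    ultimately have "\<bar>matern \<sigma>2 \<phi> \<nu> d\<bar> \<le> P * (C * exp (- x / 2))"
      by (simp add: mult_left_mono)
    then show ?thesis unfolding x_def by (simp add: algebra_simps)
  qed
  moreover have "sqrt 2 * \<phi> / 2 > 0" using assms by simp
  ultimately show ?thesis by blast
qed

lemma abs_diff_less_if_floor_div_eq:
  fixes u v c :: real
  assumes "c > 0" "\<lfloor>u / c\<rfloor> = \<lfloor>v / c\<rfloor>"
  shows "\<bar>u - v\<bar> < c"
proof -
  have "\<bar>u / c - v / c\<bar> < 1" using assms(2) by linarith
  then show ?thesis using assms(1) by (simp add: diff_divide_distrib[symmetric] divide_less_eq)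
qed

lemma abs_floor_div_diff_le:
  fixes u v c :: real
  assumes "c > 0"
  shows "c * \<bar>real_of_int (\<lfloor>u / c\<rfloor> - \<lfloor>v / c\<rfloor>)\<bar> \<le> \<bar>u - v\<bar> + c"
proof -
  have "\<bar>real_of_int (\<lfloor>u / c\<rfloor> - \<lfloor>v / c\<rfloor>)\<bar> \<le> \<bar>u / c - v / c\<bar> + 1" by linarith
  also have "\<bar>u / c - v / c\<bar> = \<bar>u - v\<bar> / c" using assms by (simp add: diff_divide_distrib[symmetric])
  finally show ?thesis using assms by (simp add: field_simps)
qed

definition cell_offset :: "real \<Rightarrow> real^2 \<Rightarrow> real^2 \<Rightarrow> int \<times> int" where
  "cell_offset c x y = (\<lfloor>y $ 1 / c\<rfloor> - \<lfloor>x $ 1 / c\<rfloor>, \<lfloor>y $ 2 / c\<rfloor> - \<lfloor>x $ 2 / c\<rfloor>)"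

lemma norm_diff_less_if_cell_offset_eq:
  assumes "c > 0" "cell_offset c x y = cell_offset c x y'"
  shows "norm (y - y') < 2 * c"
proof -
  have component_less: "\<bar>(y - y') $ k\<bar> < c" for k
    using exhaust_2[of k] assms abs_diff_less_if_floor_div_eq[OF assms(1), of "y $ k" "y' $ k"]
    by (auto simp: cell_offset_def)
  have "norm (y - y') \<le> \<bar>(y - y') $ 1\<bar> + \<bar>(y - y') $ 2\<bar>"
    using norm_le_l1_cart[of "y - y'"] by (simp add: sum_2)
  with component_less[of 1] component_less[of 2] show ?thesis by linarith
qed

lemma abs_cell_offset_le:
  assumes "c > 0"
  shows "c * (\<bar>real_of_int (fst (cell_offset c x y))\<bar> + \<bar>real_of_int (snd (cell_offset c x y))\<bar>)
           \<le> 2 * (norm (x - y) + c)"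
proof -
  have "c * \<bar>real_of_int (\<lfloor>y $ k / c\<rfloor> - \<lfloor>x $ k / c\<rfloor>)\<bar> \<le> norm (x - y) + c" for k
  proof -
    have "\<bar>y $ k - x $ k\<bar> = \<bar>(x - y) $ k\<bar>" by simp
    also have "\<dots> \<le> norm (x - y)" by (rule component_le_norm_cart)
    finally show ?thesis using abs_floor_div_diff_le[OF assms, of "y $ k" "x $ k"] by linarith
  qed
  from this[of 1] this[of 2] show ?thesis by (simp add: cell_offset_def distrib_left)
qed

lemma sum_exp_abs_int_eq:
  fixes \<beta> :: real
  assumes "\<beta> > 0"
  shows "(\<Sum>k\<in>{-int N..int N}. exp (- \<beta> * \<bar>real_of_int k\<bar>))
           = (1 + exp (- \<beta>) - 2 * exp (- \<beta>) ^ (N + 1)) / (1 - exp (- \<beta>))"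
proof (induction N)
  case 0
  have "exp (- \<beta>) < 1" using assms by simp
  then show ?case by simp
next
  case (Suc N)
  let ?q = "exp (- \<beta>)"
  have "?q < 1" using assms by simp
  have cells: "{-int (Suc N)..int (Suc N)} = insert (- int (Suc N)) (insert (int (Suc N)) {-int N..int N})"
    by auto
  have "exp (- \<beta> * real (Suc N)) = ?q ^ Suc N"
    by (metis exp_of_nat_mult mult.commute mult_minus_left)
  then have "(\<Sum>k\<in>{-int (Suc N)..int (Suc N)}. exp (- \<beta> * \<bar>real_of_int k\<bar>))
      = 2 * ?q ^ Suc N + (\<Sum>k\<in>{-int N..int N}. exp (- \<beta> * \<bar>real_of_int k\<bar>))"
    unfolding cells by (simp add: add.commute)
  also have "\<dots> = 2 * ?q ^ Suc N + (1 + ?q - 2 * ?q ^ (N + 1)) / (1 - ?q)"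
    using Suc by simp
  also have "\<dots> = (1 + ?q - 2 * ?q ^ (Suc N + 1)) / (1 - ?q)"
    using \<open>?q < 1\<close> by (simp add: field_simps)
  finally show ?case .
qed

lemma sum_exp_abs_int_le:
  fixes \<beta> :: real
  assumes "\<beta> > 0"
  shows "(\<Sum>k\<in>{-int N..int N}. exp (- \<beta> * \<bar>real_of_int k\<bar>)) \<le> (1 + exp (- \<beta>)) / (1 - exp (- \<beta>))"
proof -
  have "exp (- \<beta>) < 1" "exp (- \<beta>) ^ (N + 1) \<ge> 0" using assms by simp_all
  then show ?thesis unfolding sum_exp_abs_int_eq[OF assms] by (simp add: divide_right_mono)
qed

lemma sum_fst_snd_product_le_square:
  fixes F :: "int \<Rightarrow> real" and P :: "(int \<times> int) set"
  assumes "finite P" "\<And>k. F k \<ge> 0" "\<And>N. (\<Sum>k\<in>{-int N..int N}. F k) \<le> M"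
  shows "(\<Sum>p\<in>P. F (fst p) * F (snd p)) \<le> M\<^sup>2"
proof -
  obtain N where N: "P \<subseteq> {-int N..int N} \<times> {-int N..int N}"
  proof
    let ?N = "nat (Max ((\<lambda>p. \<bar>fst p\<bar> + \<bar>snd p\<bar>) ` P))"
    show "P \<subseteq> {-int ?N..int ?N} \<times> {-int ?N..int ?N}"
    proof
      fix p assume "p \<in> P"
      then have "\<bar>fst p\<bar> + \<bar>snd p\<bar> \<le> Max ((\<lambda>p. \<bar>fst p\<bar> + \<bar>snd p\<bar>) ` P)"
        using assms(1) by (intro Max_ge) auto
      then show "p \<in> {-int ?N..int ?N} \<times> {-int ?N..int ?N}" by (cases p) auto
    qed
  qed
  have "(\<Sum>p\<in>P. F (fst p) * F (snd p)) \<le> (\<Sum>p\<in>{-int N..int N} \<times> {-int N..int N}. F (fst p) * F (snd p))"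
    using N assms(2) by (intro sum_mono2) auto
  also have "\<dots> = (\<Sum>k\<in>{-int N..int N}. F k) * (\<Sum>l\<in>{-int N..int N}. F l)"
    by (simp add: sum_product sum.cartesian_product case_prod_beta')
  also have "\<dots> \<le> M * M"
    using assms(2,3) by (intro mult_mono sum_nonneg) (auto intro: order_trans[OF sum_nonneg])
  finally show ?thesis by (simp add: power2_eq_square)
qed

definition separated_exp_sum_bound :: "real \<Rightarrow> real \<Rightarrow> real" where
  "separated_exp_sum_bound b h = exp (b * h / 2) * ((1 + exp (- (b * h / 4))) / (1 - exp (- (b * h / 4))))\<^sup>2"

text \<open>A square of side \<open>h / 2\<close> contains at most one point of an \<open>h\<close>-separated set, so the sum
  is dominated by a geometric sum over the offsets of these squares from the one containing \<open>x\<close>.\<close>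

lemma separated_sum_exp_norm_le:
  fixes S :: "(real^2) set" and x :: "real^2" and h b :: real
  assumes "finite S" "h > 0" "b > 0"
    and sep: "\<And>y y'. y \<in> S \<Longrightarrow> y' \<in> S \<Longrightarrow> y \<noteq> y' \<Longrightarrow> h \<le> norm (y - y')"
  shows "(\<Sum>y\<in>S. exp (- b * norm (x - y))) \<le> separated_exp_sum_bound b h"
proof -
  define c where "c = h / 2"
  define F where "F k = exp (- (b * h / 4) * \<bar>real_of_int k\<bar>)" for k
  have c: "c > 0" unfolding c_def using assms by simp
  have inj: "inj_on (cell_offset c x) S"
    using sep norm_diff_less_if_cell_offset_eq[OF c] unfolding c_def by (fastforce intro: inj_onI)
  have "exp (- b * norm (x - y)) \<le> exp (b * c) * (F (fst (cell_offset c x y)) * F (snd (cell_offset c x y)))"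
    for y
  proof -
    have "b * (c * (\<bar>real_of_int (fst (cell_offset c x y))\<bar> + \<bar>real_of_int (snd (cell_offset c x y))\<bar>))
        \<le> b * (2 * (norm (x - y) + c))"
      using abs_cell_offset_le[OF c] assms(3) by (intro mult_left_mono) auto
    then show ?thesis unfolding F_def c_def by (simp add: algebra_simps flip: exp_add)
  qed
  then have "(\<Sum>y\<in>S. exp (- b * norm (x - y)))
      \<le> exp (b * c) * (\<Sum>p\<in>cell_offset c x ` S. F (fst p) * F (snd p))"
    by (simp add: sum.reindex[OF inj] sum_distrib_left sum_mono)
  also have "\<dots> \<le> exp (b * c) * ((1 + exp (- (b * h / 4))) / (1 - exp (- (b * h / 4))))\<^sup>2"
    using assms unfolding F_def
    by (intro mult_left_mono sum_fst_snd_product_le_square sum_exp_abs_int_le) auto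
  finally show ?thesis unfolding c_def separated_exp_sum_bound_def by simp
qed

lemma abs_eigenvalue_le_row_sum_bound:
  fixes A :: "real mat"
  assumes A: "A \<in> carrier_mat n n" and "eigenvalue A k"
    and row: "\<And>i. i < n \<Longrightarrow> (\<Sum>j<n. \<bar>A $$ (i, j)\<bar>) \<le> R"
  shows "\<bar>k\<bar> \<le> R"
proof -
  obtain v where v: "v \<in> carrier_vec n" "v \<noteq> 0\<^sub>v n" "A *\<^sub>v v = k \<cdot>\<^sub>v v"
    using assms(1,2) unfolding eigenvalue_def eigenvector_def by auto
  define M where "M = Max ((\<lambda>j. \<bar>v $ j\<bar>) ` {..<n})"
  have le_M: "\<bar>v $ j\<bar> \<le> M" if "j < n" for j
    unfolding M_def using that by (intro Max_ge) auto
  obtain i where i: "i < n" "v $ i \<noteq> 0"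
    using v(1,2) by (metis carrier_vecD eq_vecI index_zero_vec)
  then obtain i0 where i0: "i0 < n" "\<bar>v $ i0\<bar> = M"
    using Max_in[of "(\<lambda>j. \<bar>v $ j\<bar>) ` {..<n}"] unfolding M_def by fastforce
  have M_pos: "M > 0" using le_M[OF i(1)] i(2) by linarith
  have "\<bar>k\<bar> * M = \<bar>(A *\<^sub>v v) $ i0\<bar>" using v(1,3) i0 by (simp add: abs_mult)
  also have "\<dots> = \<bar>\<Sum>j<n. A $$ (i0, j) * v $ j\<bar>"
    using A v(1) i0(1) by (simp add: scalar_prod_def atLeast0LessThan)
  also have "\<dots> \<le> (\<Sum>j<n. \<bar>A $$ (i0, j)\<bar> * M)"
    by (rule order_trans[OF sum_abs]) (auto simp: abs_mult intro!: sum_mono mult_left_mono le_M)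
  also have "\<dots> \<le> R * M"
    using row[OF i0(1)] M_pos by (simp add: sum_distrib_right[symmetric] mult_right_mono)
  finally show ?thesis using M_pos by simp
qed

lemma matern_Sigma_row_sum_le:
  fixes s :: "nat \<Rightarrow> real^2"
  assumes "h > 0" "b > 0" "B \<ge> 0" "i < n"
    and decay: "\<And>d. d \<ge> h \<Longrightarrow> \<bar>matern \<sigma>2 \<phi> \<nu> d\<bar> \<le> B * exp (- b * d)"
    and sep: "\<forall>i<n. \<forall>j<n. i \<noteq> j \<longrightarrow> norm (s i - s j) \<ge> h"
  shows "(\<Sum>j<n. \<bar>matern_Sigma \<sigma>2 \<phi> \<nu> \<tau>2 n s $$ (i, j)\<bar>)
           \<le> \<bar>\<sigma>2 + \<tau>2\<bar> + B * separated_exp_sum_bound b h"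
proof -
  define J where "J = {..<n} - {i}"
  have inj: "inj_on s J"
    using sep assms(1) unfolding J_def by (fastforce intro: inj_onI)
  have "(\<Sum>j<n. \<bar>matern_Sigma \<sigma>2 \<phi> \<nu> \<tau>2 n s $$ (i, j)\<bar>)
      = \<bar>\<sigma>2 + \<tau>2\<bar> + (\<Sum>j\<in>J. \<bar>matern \<sigma>2 \<phi> \<nu> (norm (s i - s j))\<bar>)"
    using assms(4) unfolding J_def
    by (simp add: sum.remove[of _ i] matern_Sigma_def matern_def)
  also have "\<dots> \<le> \<bar>\<sigma>2 + \<tau>2\<bar> + (\<Sum>j\<in>J. B * exp (- b * norm (s i - s j)))"
    using decay sep assms(4) unfolding J_def by (intro add_left_mono sum_mono) auto
  also have "\<dots> = \<bar>\<sigma>2 + \<tau>2\<bar> + B * (\<Sum>y\<in>s ` J. exp (- b * norm (s i - y)))"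
    by (simp add: sum.reindex[OF inj] sum_distrib_left)
  also have "\<dots> \<le> \<bar>\<sigma>2 + \<tau>2\<bar> + B * separated_exp_sum_bound b h"
    using assms(1-3) sep unfolding J_def
    by (intro add_left_mono mult_left_mono separated_sum_exp_norm_le) auto
  finally show ?thesis .
qed

lemma matern_Sigma_eigenvalues_bounded:
  fixes \<sigma>2 \<phi> \<nu> \<tau>2 h :: real
  assumes "\<phi> > 0" "\<nu> > 0" "h > 0"
  shows "\<exists>R. \<forall>n s k. (\<forall>i<n. \<forall>j<n. i \<noteq> j \<longrightarrow> norm (s i - s j) \<ge> h)
           \<longrightarrow> eigenvalue (matern_Sigma \<sigma>2 \<phi> \<nu> \<tau>2 n s) k \<longrightarrow> k \<le> R"
proof -
  obtain B b where b: "b > 0" and decay: "\<And>d. d \<ge> h \<Longrightarrow> \<bar>matern \<sigma>2 \<phi> \<nu> d\<bar> \<le> B * exp (- b * d)"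
    using matern_exp_decay[OF assms] by blast
  have "0 \<le> B * exp (- b * h)" using decay[of h] abs_ge_zero order_trans by blast
  then have "B \<ge> 0" by (simp add: zero_le_mult_iff)
  define R where "R = \<bar>\<sigma>2 + \<tau>2\<bar> + B * separated_exp_sum_bound b h"
  show ?thesis
  proof (intro exI[of _ R] allI impI)
    fix n s k
    assume sep: "\<forall>i<n. \<forall>j<n. i \<noteq> j \<longrightarrow> norm (s i - s j) \<ge> h"
      and "eigenvalue (matern_Sigma \<sigma>2 \<phi> \<nu> \<tau>2 n s) k"
    then have "\<bar>k\<bar> \<le> R"
      unfolding R_def using matern_Sigma_row_sum_le[OF assms(3) b \<open>B \<ge> 0\<close> _ decay sep]
      by (intro abs_eigenvalue_le_row_sum_bound) (auto simp: matern_Sigma_def)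
    then show "k \<le> R" by simp
  qed
qed

text \<open>\<open>Max\<close> is unspecified on empty and infinite sets, where it takes the same junk value
  \<open>Max {}\<close>; so no finiteness or non-emptiness of \<open>S\<close> is needed.\<close>

lemma Max_le_max_Max_empty:
  fixes S :: "'a::linorder set"
  assumes "\<forall>k\<in>S. k \<le> R"
  shows "Max S \<le> max R (Max {})"
proof (cases "finite S \<and> S \<noteq> {}")
  case True
  then show ?thesis using assms Max_in by (simp add: le_max_iff_disj)
next
  case False
  then have "Max S = the None" by (auto simp: Max.eq_fold' Max.infinite)
  moreover have "Max {} = (the None :: 'a)" by (simp add: Max.eq_fold')
  ultimately show ?thesis by simp
qed

theorem lemmaS4:
  fixes \<sigma>2 \<phi> \<nu> \<tau>2 h :: real
  assumes "\<sigma>2 > 0" and "\<phi> > 0" and "\<nu> > 0" and "h > 0" and "\<tau>2 \<ge> 0"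
  shows "\<exists>\<Psi>high :: real. \<forall>n :: nat. \<forall>s :: nat \<Rightarrow> real^2.
           n \<ge> 1 \<longrightarrow>
           (\<forall>i<n. \<forall>j<n. i \<noteq> j \<longrightarrow> norm (s i - s j) \<ge> h) \<longrightarrow>
           Max {k. eigenvalue (matern_Sigma \<sigma>2 \<phi> \<nu> \<tau>2 n s) k} \<le> \<Psi>high"
proof -
  obtain R where "\<forall>n s k. (\<forall>i<n. \<forall>j<n. i \<noteq> j \<longrightarrow> norm (s i - s j) \<ge> h)
      \<longrightarrow> eigenvalue (matern_Sigma \<sigma>2 \<phi> \<nu> \<tau>2 n s) k \<longrightarrow> k \<le> R"
    using matern_Sigma_eigenvalues_bounded[OF assms(2-4)] by blast
  then show ?thesis
    by (intro exI[of _ "max R (Max {})"] allI impI Max_le_max_Max_empty) blast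
qed

end
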